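(* Let $(\mathbf{A},E,D)$ be a scheme on $P$ compute nodes with gradient dimension $d\ge1$. If $(\mathbf{A},E,D)$ tolerates $s$ adversarial nodes, then $s\le \frac{P-1}{2}$.
   Context: Fix integers $P\ge 1$ (number of compute nodes) and $d\ge 1$. A scheme is a triple $(\mathbf{A},E,D)$ where $\mathbf{A}\in\{0,1\}^{P\times P}$ is an allocation matrix ($\mathbf{A}_{j,k}=1$ means node $j$ is assigned gradient $k$), $E=(E_1,\dots,E_P)$ with each $E_j:\mathbb{R}^{d\times P}\to\mathbb{R}^d$ an arbitrary function (encoder of node $j$), and $D:\mathbb{R}^{d\times P}\to\mathbb{R}^d$ an arbitrary function (decoder). For $\mathbf{G}=[\mathbf{g}_1,\dots,\mathbf{g}_P]\in\mathbb{R}^{d\times P}$, let $\mathbf{Y}_j=(\mathbf{1}_d\mathbf{A}_{j,\cdot})\odot\mathbf{G}$ (the $d\times P$ matrix whose $k$-th column is $\mathbf{g}_k$ if $\mathbf{A}_{j,k}=1$ and $\mathbf{0}_d$ otherwise), $\mathbf{z}_j=E_j(\mathbf{Y}_j)$, and $\mathbf{Z}^{\mathbf{A},E,\mathbf{G}}=[\mathbf{z}_1,\dots,\mathbf{z}_P]$. The scheme tolerates $s$ adversarial nodes if for every $\mathbf{G}\in\mathbb{R}^{d\times P}$ and every $\mathbf{N}\in\mathbb{R}^{d\times P}$ with at most $s$ nonzero columns, $D(\mathbf{Z}^{\mathbf{A},E,\mathbf{G}}+\mathbf{N})=\mathbf{G}\mathbf{1}_P$. *)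

theory Defs
  imports "HOL-Analysis.Analysis"
begin

text \<open>Matrices in R^(d x P) are rendered as real^'p^'d (rows indexed by 'd,
columns by the node/gradient index 'p); columns are vectors in real^'d.
An allocation matrix A in {0,1}^(P x P) is rendered as a boolean matrix
bool^'p^'p, A $ j $ k = True meaning node j is assigned gradient k.\<close>

definition col :: "real^'p^'d \<Rightarrow> 'p \<Rightarrow> real^'d" where
  "col M k = (\<chi> i. M $ i $ k)"

definition node_input :: "bool^'p^'p \<Rightarrow> real^'p^'d \<Rightarrow> 'p \<Rightarrow> real^'p^'d" where
  "node_input A G j = (\<chi> i k. if A $ j $ k then G $ i $ k else 0)"

definition encoded :: "bool^'p^'p \<Rightarrow> ('p \<Rightarrow> real^'p^'d \<Rightarrow> real^'d) \<Rightarrow> real^'p^'d \<Rightarrow> real^'p^'d" where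
  "encoded A E G = (\<chi> i j. E j (node_input A G j) $ i)"

definition num_nonzero_cols :: "real^'p^'d \<Rightarrow> nat" where
  "num_nonzero_cols N = card {k. col N k \<noteq> 0}"

definition tolerates ::
  "bool^'p^'p \<Rightarrow> ('p \<Rightarrow> real^'p^'d \<Rightarrow> real^'d) \<Rightarrow> (real^'p^'d \<Rightarrow> real^'d) \<Rightarrow> nat \<Rightarrow> bool" where
  "tolerates A E D s \<longleftrightarrow>
     (\<forall>G N. num_nonzero_cols N \<le> s \<longrightarrow> D (encoded A E G + N) = G *v (1 :: real^'p))"

end

theory Submission
  imports Defs
begin

text \<open>If \<open>P \<le> 2s\<close>, split the nodes into two halves \<open>S\<close> and \<open>-S\<close> of size at most \<open>s\<close>. The
  matrix agreeing with the encoding of \<open>G\<close> on \<open>S\<close> and with that of \<open>G'\<close> on \<open>-S\<close> is a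
  corruption of both encodings by at most \<open>s\<close> columns, so the decoder must return both
  \<open>G 1\<close> and \<open>G' 1\<close>. Taking \<open>G = 0\<close> and \<open>G'\<close> the all-ones matrix gives \<open>0 = P\<close>.\<close>

lemma num_nonzero_cols_le_card:
  fixes N :: "real^'p^'d"
  assumes "\<And>k. k \<notin> T \<Longrightarrow> col N k = 0"
  shows "num_nonzero_cols N \<le> card T"
proof -
  have "{k. col N k \<noteq> 0} \<subseteq> T" using assms by auto
  then show ?thesis unfolding num_nonzero_cols_def by (simp add: card_mono)
qed

lemma exists_subset_card_le_and_compl_card_le:
  assumes "CARD('a) \<le> 2 * s"
  obtains S :: "'a::finite set" where "card S \<le> s" and "card (- S) \<le> s"
proof -
  obtain S :: "'a set" where S: "card S = min s CARD('a)"
    using obtain_subset_with_card_n[of "min s CARD('a)" "UNIV :: 'a set"] by auto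
  have "card (- S) = CARD('a) - card S"
    by (simp add: Compl_eq_Diff_UNIV card_Diff_subset)
  with S assms have "card (- S) \<le> s" by (auto simp: min_def)
  with S show thesis using that by simp
qed

lemma tolerates_row_sums_eq:
  fixes A :: "bool^'p^'p" and E :: "'p \<Rightarrow> real^'p^'d \<Rightarrow> real^'d"
    and D :: "real^'p^'d \<Rightarrow> real^'d" and G G' :: "real^'p^'d"
  assumes tol: "tolerates A E D s" and small: "CARD('p) \<le> 2 * s"
  shows "G *v (1 :: real^'p) = G' *v 1"
proof -
  obtain S :: "'p set" where S: "card S \<le> s" and compl_S: "card (- S) \<le> s"
    using exists_subset_card_le_and_compl_card_le[OF small] .
  define Z where "Z = encoded A E G"
  define Z' where "Z' = encoded A E G'"
  define M :: "real^'p^'d" where "M = (\<chi> i k. if k \<in> S then Z $ i $ k else Z' $ i $ k)"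
  have "num_nonzero_cols (M - Z) \<le> card (- S)"
    by (rule num_nonzero_cols_le_card) (simp add: col_def M_def vec_eq_iff)
  with compl_S tol have "D (Z + (M - Z)) = G *v 1"
    unfolding tolerates_def Z_def by (meson le_trans)
  moreover have "num_nonzero_cols (M - Z') \<le> card S"
    by (rule num_nonzero_cols_le_card) (simp add: col_def M_def vec_eq_iff)
  with S tol have "D (Z' + (M - Z')) = G' *v 1"
    unfolding tolerates_def Z'_def by (meson le_trans)
  ultimately show ?thesis by simp
qed

lemma all_ones_mult_ones:
  "((\<chi> i k. 1) :: real^'p^'d) *v (1 :: real^'p) = of_nat CARD('p)"
  by (simp add: vec_eq_iff matrix_vector_mult_def of_nat_index)

theorem mainTheorem2:
  fixes A :: "bool^'p^'p" and E :: "'p \<Rightarrow> real^'p^'d \<Rightarrow> real^'d"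
    and D :: "real^'p^'d \<Rightarrow> real^'d" and s :: nat
  assumes "tolerates A E D s"
  shows "real s \<le> (real CARD('p) - 1) / 2"
proof (rule ccontr)
  assume "\<not> ?thesis"
  then have "real CARD('p) < real (2 * s + 1)" by (simp add: field_simps)
  then have "CARD('p) \<le> 2 * s" by linarith
  then have "(0 :: real^'p^'d) *v (1 :: real^'p) = (\<chi> i k. 1) *v (1 :: real^'p)"
    by (rule tolerates_row_sums_eq[OF assms])
  then have "(0 :: real^'d) = of_nat CARD('p)" by (simp add: all_ones_mult_ones)
  then show False by (simp add: vec_eq_iff of_nat_index)
qed

end
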